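(* Let $(M,\rho)$ be a metric space, $f:[a,b]\to M$ arbitrary, and let $E\subset[a,b]$ be a Lebesgue measurable set such that $md(f,x)$ exists and is finite for every $x\in E$ (and $x\mapsto md(f,x)$ is measurable on $E$). Then $$\mathcal H^1(f(E))\le\int_E md(f,x)\,dx.$$
   Context: For $f:[a,b]\to(M,\rho)$ and $x\in[a,b]$, $md(f,x)=\lim_{t\to0,\ x+t\in[a,b]}\rho(f(x+t),f(x))/|t|$ when the limit exists. $\mathcal H^1$ is the one-dimensional Hausdorff measure on $M$. The integral of the nonnegative function may be $+\infty$. *)

theory Defs
  imports "HOL-Analysis.Analysis"
begin

definition md_quot :: "(real \<Rightarrow> 'a::metric_space) \<Rightarrow> real \<Rightarrow> real \<Rightarrow> real" where
  "md_quot f x t = dist (f (x + t)) (f x) / \<bar>t\<bar>"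

definition md_exists :: "(real \<Rightarrow> 'a::metric_space) \<Rightarrow> real \<Rightarrow> real \<Rightarrow> real \<Rightarrow> bool" where
  "md_exists f a b x \<longleftrightarrow> (\<exists>L. (md_quot f x \<longlongrightarrow> L) (at 0 within {t. x + t \<in> {a..b}}))"

definition md :: "(real \<Rightarrow> 'a::metric_space) \<Rightarrow> real \<Rightarrow> real \<Rightarrow> real \<Rightarrow> real" where
  "md f a b x = Lim (at 0 within {t. x + t \<in> {a..b}}) (md_quot f x)"

definition hausdorff1_pre :: "real \<Rightarrow> 'a::metric_space set \<Rightarrow> ennreal" where
  "hausdorff1_pre \<delta> A =
     (INF C \<in> {C :: nat \<Rightarrow> 'a set. A \<subseteq> (\<Union>n. C n) \<and> (\<forall>n. bounded (C n) \<and> diameter (C n) \<le> \<delta>)}.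
        (\<Sum>n. ennreal (diameter (C n))))"

definition hausdorff1 :: "'a::metric_space set \<Rightarrow> ennreal" where
  "hausdorff1 A = (SUP \<delta> \<in> {0<..}. hausdorff1_pre \<delta> A)"

end

theory Submission
  imports Defs
begin

text \<open>
  Fix \<open>\<epsilon> > 0\<close> and split \<open>E\<close> into the measurable bands \<open>E\<^sub>j\<close> on which
  \<open>md(f,\<cdot>)\<close> lies in \<open>[j\<epsilon>, (j+1)\<epsilon>)\<close>; at every point of \<open>E\<^sub>j\<close> the map \<open>f\<close> is
  pointwise \<open>(j+2)\<epsilon>\<close>-Lipschitz. If \<open>f\<close> is pointwise \<open>C\<close>-Lipschitz at every point of \<open>A\<close>,
  then \<open>\<H>\<^sup>1(f A) \<le> C |A|\<close>: inside any open \<open>U \<supseteq> A\<close>, the Vitali covering theorem gives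
  disjoint balls centred in \<open>A\<close> covering \<open>A\<close> up to a null set, and the image of a ball of
  length \<open>l\<close> has diameter at most \<open>C l\<close>. The image of the remaining null set has measure zero,
  since a dyadic covering bounds it by \<open>2C\<close> times the measure of any open superset.
  Summing over \<open>j\<close> gives \<open>\<H>\<^sup>1(f E) \<le> \<integral>\<^sub>E md(f,\<cdot>) + 2\<epsilon>|E|\<close>.
\<close>

definition pointwise_lipschitz ::
    "real \<Rightarrow> ('b::metric_space \<Rightarrow> 'a::metric_space) \<Rightarrow> 'b set \<Rightarrow> 'b \<Rightarrow> bool" where
  "pointwise_lipschitz C f S x \<longleftrightarrow> (\<exists>r>0. \<forall>y \<in> S \<inter> ball x r. dist (f y) (f x) \<le> C * dist y x)"

lemma pointwise_lipschitz_mono: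
  "pointwise_lipschitz C f S x \<Longrightarrow> C \<le> D \<Longrightarrow> pointwise_lipschitz D f S x"
  unfolding pointwise_lipschitz_def by (meson mult_right_mono order_trans zero_le_dist)

lemma hausdorff1_pre_le_cover:
  assumes "X \<subseteq> (\<Union>n. C n)" "\<And>n. bounded (C n)" "\<And>n. diameter (C n) \<le> d"
  shows "hausdorff1_pre d X \<le> (\<Sum>n. ennreal (diameter (C n)))"
  unfolding hausdorff1_pre_def by (rule INF_lower) (use assms in auto)

lemma hausdorff1_pre_mono: "X \<subseteq> Y \<Longrightarrow> hausdorff1_pre d X \<le> hausdorff1_pre d Y"
  unfolding hausdorff1_pre_def by (rule INF_mono) auto

lemma hausdorff1_pre_empty: "0 \<le> d \<Longrightarrow> hausdorff1_pre d {} = 0"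
  using hausdorff1_pre_le_cover[of "{}" "\<lambda>n. {}" d] by simp

lemma hausdorff1_pre_less_cover:
  "hausdorff1_pre d X < y \<Longrightarrow> \<exists>C. X \<subseteq> (\<Union>n. C n) \<and> (\<forall>n. bounded (C n) \<and> diameter (C n) \<le> d) \<and>
      (\<Sum>n. ennreal (diameter (C n))) < y"
  unfolding hausdorff1_pre_def by (subst (asm) INF_less_iff) blast

lemma hausdorff1_pre_UN_le_covers:
  assumes "\<And>j. X j \<subseteq> (\<Union>n. C j n)" "\<And>j n. bounded (C j n)" "\<And>j n. diameter (C j n) \<le> d"
  shows "hausdorff1_pre d (\<Union>j. X j) \<le> (\<Sum>j. \<Sum>n. ennreal (diameter (C j n)))"
proof -
  define D where "D n = C (fst (prod_decode n)) (snd (prod_decode n))" for n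
  have "(\<Union>j. X j) \<subseteq> (\<Union>n. D n)"
  proof
    fix x assume "x \<in> (\<Union>j. X j)"
    then obtain j k where "x \<in> C j k" using assms(1) by blast
    then have "x \<in> D (prod_encode (j, k))" by (simp add: D_def)
    then show "x \<in> (\<Union>n. D n)" by blast
  qed
  then have "hausdorff1_pre d (\<Union>j. X j) \<le> (\<Sum>n. ennreal (diameter (D n)))"
    by (rule hausdorff1_pre_le_cover) (auto simp: D_def assms)
  also have "\<dots> = (\<Sum>j. \<Sum>n. ennreal (diameter (C j n)))"
    unfolding D_def
    using suminf_ennreal_2dimen[of "\<lambda>j. \<Sum>n. ennreal (diameter (C j n))"
        "\<lambda>(j, n). ennreal (diameter (C j n))"]
    by (simp add: case_prod_beta)
  finally show ?thesis .
qed

lemma hausdorff1_pre_countable_subadditive: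
  "hausdorff1_pre d (\<Union>j. X j) \<le> (\<Sum>j. hausdorff1_pre d (X j))"
proof (rule ennreal_le_epsilon)
  fix e :: real
  assume fin: "(\<Sum>j. hausdorff1_pre d (X j)) < top" and "0 < e"
  have "hausdorff1_pre d (X j) < hausdorff1_pre d (X j) + ennreal (e * (1/2)^Suc j)" for j
  proof -
    have "hausdorff1_pre d (X j) < top" using ennreal_suminf_lessD[OF fin] .
    then show ?thesis using \<open>0 < e\<close> by simp
  qed
  then have "\<exists>C. X j \<subseteq> (\<Union>n. C n) \<and> (\<forall>n. bounded (C n) \<and> diameter (C n) \<le> d) \<and>
      (\<Sum>n. ennreal (diameter (C n))) < hausdorff1_pre d (X j) + ennreal (e * (1/2)^Suc j)" for j
    by (rule hausdorff1_pre_less_cover)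
  then obtain C where C: "\<And>j. X j \<subseteq> (\<Union>n. C j n)" "\<And>j n. bounded (C j n)"
      "\<And>j n. diameter (C j n) \<le> d"
      "\<And>j. (\<Sum>n. ennreal (diameter (C j n))) < hausdorff1_pre d (X j) + ennreal (e * (1/2)^Suc j)"
    by metis
  have "hausdorff1_pre d (\<Union>j. X j) \<le> (\<Sum>j. \<Sum>n. ennreal (diameter (C j n)))"
    using C(1-3) by (rule hausdorff1_pre_UN_le_covers)
  also have "\<dots> \<le> (\<Sum>j. hausdorff1_pre d (X j) + ennreal (e * (1/2)^Suc j))"
    by (intro suminf_le summableI less_imp_le C(4))
  also have "\<dots> = (\<Sum>j. hausdorff1_pre d (X j)) + (\<Sum>j. ennreal (e * (1/2)^Suc j))"
    by (rule suminf_add[symmetric]) auto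
  also have "(\<Sum>j. ennreal (e * (1/2)^Suc j)) = ennreal e"
  proof -
    have "(\<lambda>j. e * (1/2)^Suc j) sums (e * 1)"
      by (intro sums_mult power_half_series)
    then show ?thesis using \<open>0 < e\<close> by (subst suminf_ennreal2) (auto simp: sums_iff)
  qed
  finally show "hausdorff1_pre d (\<Union>j. X j) \<le> (\<Sum>j. hausdorff1_pre d (X j)) + ennreal e" .
qed

lemma hausdorff1_pre_Un:
  assumes "0 \<le> d"
  shows "hausdorff1_pre d (X \<union> Y) \<le> hausdorff1_pre d X + hausdorff1_pre d Y"
proof -
  define Z where "Z n = (if n = 0 then X else if n = 1 then Y else {})" for n :: nat
  have "X \<union> Y = (\<Union>n. Z n)"
    by (auto simp: Z_def split: if_splits)
  then have "hausdorff1_pre d (X \<union> Y) \<le> (\<Sum>n. hausdorff1_pre d (Z n))"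
    using hausdorff1_pre_countable_subadditive[of d Z] by simp
  also have "\<dots> = (\<Sum>n\<in>{0, 1}. hausdorff1_pre d (Z n))"
    by (rule suminf_finite) (auto simp: Z_def hausdorff1_pre_empty assms)
  also have "\<dots> = hausdorff1_pre d X + hausdorff1_pre d Y" by (simp add: Z_def)
  finally show ?thesis .
qed

lemma hausdorff1_pre_le_disjoint_cover:
  fixes G :: "'i \<Rightarrow> 'a::metric_space set" and H :: "'i \<Rightarrow> 'b set"
  assumes I: "countable I" and T: "T \<subseteq> (\<Union>i\<in>I. G i)" and d: "0 \<le> d"
    and G: "\<And>i. i \<in> I \<Longrightarrow> bounded (G i) \<and> diameter (G i) \<le> d"
    and GH: "\<And>i. i \<in> I \<Longrightarrow> ennreal (diameter (G i)) \<le> c * emeasure M (H i)"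
    and H: "\<And>i. i \<in> I \<Longrightarrow> H i \<in> sets M" "disjoint_family_on H I"
  shows "hausdorff1_pre d T \<le> c * emeasure M (\<Union>i\<in>I. H i)"
proof -
  define J where "J = to_nat_on I ` I"
  define D where "D n = (if n \<in> J then G (from_nat_into I n) else {})" for n
  define HH where "HH n = (if n \<in> J then H (from_nat_into I n) else {})" for n
  have J: "from_nat_into I n \<in> I" "to_nat_on I (from_nat_into I n) = n" if "n \<in> J" for n
    using I that by (auto simp: J_def)
  have "T \<subseteq> (\<Union>n. D n)"
  proof
    fix x assume "x \<in> T"
    then obtain i where "i \<in> I" "x \<in> G i" using T by blast
    then have "x \<in> D (to_nat_on I i)" using I by (simp add: D_def J_def)
    then show "x \<in> (\<Union>n. D n)" by blast
  qed
  then have "hausdorff1_pre d T \<le> (\<Sum>n. ennreal (diameter (D n)))"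
    by (rule hausdorff1_pre_le_cover) (use J G d in \<open>auto simp: D_def\<close>)
  also have "\<dots> \<le> (\<Sum>n. c * emeasure M (HH n))"
    by (intro suminf_le summableI) (use J GH in \<open>auto simp: D_def HH_def\<close>)
  also have "\<dots> = c * emeasure M (\<Union>n. HH n)"
  proof -
    have "disjoint_family HH"
      using H(2) J unfolding disjoint_family_on_def HH_def by (smt (verit) Int_empty_left Int_empty_right)
    moreover have "range HH \<subseteq> sets M" using J H(1) by (auto simp: HH_def)
    ultimately show ?thesis using suminf_emeasure[of HH M] by simp
  qed
  also have "\<dots> \<le> c * emeasure M (\<Union>i\<in>I. H i)"
  proof (intro mult_left_mono emeasure_mono)
    show "(\<Union>n. HH n) \<subseteq> (\<Union>i\<in>I. H i)" using J by (auto simp: HH_def split: if_splits)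
    show "(\<Union>i\<in>I. H i) \<in> sets M" using I H(1) by (intro sets.countable_UN'') auto
  qed auto
  finally show ?thesis .
qed

lemma hausdorff1_subset_singleton:
  assumes "X \<subseteq> {p}"
  shows "hausdorff1 X = 0"
proof -
  have "hausdorff1_pre d X \<le> 0" if "0 < d" for d
    using hausdorff1_pre_le_cover[of X "\<lambda>n. {p}" d] assms that by simp
  then show ?thesis unfolding hausdorff1_def by (intro antisym SUP_least) auto
qed

lemma hausdorff1_countable_subadditive:
  "hausdorff1 (\<Union>j. X j) \<le> (\<Sum>j. hausdorff1 (X j))"
  unfolding hausdorff1_def
proof (intro SUP_least)
  fix d :: real assume "d \<in> {0<..}"
  have "hausdorff1_pre d (\<Union>j. X j) \<le> (\<Sum>j. hausdorff1_pre d (X j))"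
    by (rule hausdorff1_pre_countable_subadditive)
  also have "\<dots> \<le> (\<Sum>j. SUP d\<in>{0<..}. hausdorff1_pre d (X j))"
    by (intro suminf_le summableI SUP_upper \<open>d \<in> {0<..}\<close>)
  finally show "hausdorff1_pre d (\<Union>j. X j) \<le> (\<Sum>j. SUP d\<in>{0<..}. hausdorff1_pre d (X j))" .
qed

lemma bounded_diameter_image_le:
  assumes lip: "\<And>y. y \<in> T \<Longrightarrow> dist (f y) (f z) \<le> C * dist y z"
    and rad: "\<And>y. y \<in> T \<Longrightarrow> dist y z \<le> \<rho>" and "0 \<le> C" "0 \<le> \<rho>"
  shows "bounded (f ` T) \<and> diameter (f ` T) \<le> 2 * C * \<rho>"
proof -
  have near: "dist p (f z) \<le> C * \<rho>" if "p \<in> f ` T" for p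
    using that lip rad \<open>0 \<le> C\<close> by (smt (verit, best) image_iff mult_left_mono)
  then have "bounded (f ` T)" unfolding bounded_def by (metis dist_commute)
  moreover have "diameter (f ` T) \<le> 2 * C * \<rho>"
  proof (cases "T = {}")
    case False
    have "dist p q \<le> 2 * C * \<rho>" if "p \<in> f ` T" "q \<in> f ` T" for p q
      using dist_triangle2[of p q "f z"] near[OF that(1)] near[OF that(2)] by linarith
    then show ?thesis unfolding diameter_def using False by (auto intro!: cSUP_least)
  qed (use assms in simp)
  ultimately show ?thesis ..
qed

lemma bounded_diameter_image_interval_le:
  fixes f :: "real \<Rightarrow> 'a::metric_space"
  assumes "z \<in> {u..v}" "{u..v} \<subseteq> ball z \<rho>" "0 \<le> C"
    and "\<And>y. y \<in> S \<inter> {u..v} \<Longrightarrow> dist (f y) (f z) \<le> C * dist y z"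
  shows "bounded (f ` (S \<inter> {u..v})) \<and> diameter (f ` (S \<inter> {u..v})) \<le> 2 * C * min \<rho> (v - u)"
proof (rule bounded_diameter_image_le[OF assms(4) _ assms(3)])
  have "0 < \<rho>" using assms(1,2) by force
  then show "0 \<le> min \<rho> (v - u)" using assms(1) by simp
  show "dist y z \<le> min \<rho> (v - u)" if "y \<in> S \<inter> {u..v}" for y
    using that assms(1,2) by (force simp: dist_real_def)
qed

lemma pointwise_lipschitz_gauge:
  assumes "open U" "A \<subseteq> U" "\<And>x. x \<in> A \<Longrightarrow> pointwise_lipschitz C f S x" "0 \<le> C" "0 < d"
  obtains R where "\<And>x. 0 < R x" "\<And>x. x \<in> A \<Longrightarrow> ball x (R x) \<subseteq> U"
    "\<And>x y. x \<in> A \<Longrightarrow> y \<in> S \<inter> ball x (R x) \<Longrightarrow> dist (f y) (f x) \<le> C * dist y x"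
    "\<And>x. x \<in> A \<Longrightarrow> 2 * C * R x \<le> d"
proof -
  have "\<exists>r>0. x \<in> A \<longrightarrow> ball x r \<subseteq> U \<and>
      (\<forall>y \<in> S \<inter> ball x r. dist (f y) (f x) \<le> C * dist y x) \<and> 2 * C * r \<le> d" for x
  proof (cases "x \<in> A")
    case True
    obtain r1 where r1: "r1 > 0" "\<forall>y \<in> S \<inter> ball x r1. dist (f y) (f x) \<le> C * dist y x"
      using assms(3)[OF True] unfolding pointwise_lipschitz_def by blast
    obtain r2 where r2: "r2 > 0" "ball x r2 \<subseteq> U"
      using assms(1,2) True openE by blast
    define r where "r = min (min r1 r2) (d / (2 * C + 1))"
    have "2 * C * r \<le> (2 * C + 1) * (d / (2 * C + 1))"
      using r1 r2 assms(4,5) by (intro mult_mono) (auto simp: r_def)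
    then show ?thesis
      using r1 r2 assms(4,5) by (intro exI[of _ r]) (auto simp: r_def)
  qed (auto intro: exI[of _ 1])
  then show ?thesis using that by metis
qed

lemma le_emeasure_lebesgue_by_open_supersets:
  fixes A :: "'a::euclidean_space set"
  assumes "A \<in> sets lebesgue" "0 \<le> C"
    and bound: "\<And>U. open U \<Longrightarrow> A \<subseteq> U \<Longrightarrow> z \<le> ennreal C * emeasure lebesgue U"
  shows "z \<le> ennreal C * emeasure lebesgue A"
proof (rule ennreal_le_epsilon)
  fix e :: real assume "0 < e"
  then have e': "0 < e / (C + 1)" using \<open>0 \<le> C\<close> by simp
  obtain U where U: "open U" "A \<subseteq> U" "emeasure lebesgue (U - A) < ennreal (e / (C + 1))"
    using sets_lebesgue_outer_open[OF assms(1) e'] by metis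
  have "emeasure lebesgue U = emeasure lebesgue (A \<union> (U - A))"
    using U(2) by (simp add: Un_absorb1)
  also have "\<dots> \<le> emeasure lebesgue A + emeasure lebesgue (U - A)"
    using assms(1) U(1) by (intro emeasure_subadditive) auto
  also have "\<dots> \<le> emeasure lebesgue A + ennreal (e / (C + 1))"
    using U(3) by (intro add_left_mono) simp
  finally have "z \<le> ennreal C * (emeasure lebesgue A + ennreal (e / (C + 1)))"
    using bound[OF U(1,2)] by (meson dual_order.trans mult_left_mono zero_le)
  also have "\<dots> = ennreal C * emeasure lebesgue A + ennreal (C * (e / (C + 1)))"
    using \<open>0 \<le> C\<close> e' by (simp only: distrib_left ennreal_mult less_imp_le)
  also have "\<dots> \<le> ennreal C * emeasure lebesgue A + ennreal e"
    using \<open>0 < e\<close> \<open>0 \<le> C\<close> by (intro add_left_mono ennreal_leI) (simp add: field_simps)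
  finally show "z \<le> ennreal C * emeasure lebesgue A + ennreal e" .
qed

lemma bounded_real_covering_lemma:
  fixes N :: "real set"
  assumes "bounded N" "gauge \<gamma>"
  obtains \<D> where "countable \<D>" "\<And>K. K \<in> \<D> \<Longrightarrow> \<exists>u v. u < v \<and> K = {u..v}"
    "disjoint_family_on interior \<D>" "\<And>K. K \<in> \<D> \<Longrightarrow> \<exists>z \<in> N \<inter> K. K \<subseteq> \<gamma> z" "N \<subseteq> \<Union>\<D>"
proof -
  obtain c where "c > 0" "\<forall>x\<in>N. \<bar>x\<bar> \<le> c"
    using assms(1) by (auto simp: bounded_pos)
  then have "N \<subseteq> cbox (-c) c" "box (-c) c \<noteq> {}" by (auto simp: abs_le_iff)
  from covering_lemma[OF this assms(2)] obtain \<D> where \<D>: "countable \<D>"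
      "\<And>K. K \<in> \<D> \<Longrightarrow> interior K \<noteq> {} \<and> (\<exists>u v. K = cbox u v)"
      "pairwise (\<lambda>K L. interior K \<inter> interior L = {}) \<D>"
      "\<And>K. K \<in> \<D> \<Longrightarrow> \<exists>z \<in> N \<inter> K. K \<subseteq> \<gamma> z" "N \<subseteq> \<Union>\<D>"
    by metis
  show ?thesis
  proof (rule that[OF \<D>(1) _ _ \<D>(4,5)])
    show "\<exists>u v. u < v \<and> K = {u..v}" if K: "K \<in> \<D>" for K
    proof -
      obtain u v where "K = cbox u v" using \<D>(2)[OF K] by blast
      moreover have "u < v" using \<D>(2)[OF K] calculation by simp
      ultimately show ?thesis by auto
    qed
    show "disjoint_family_on interior \<D>"
      using \<D>(3) unfolding disjoint_family_on_def pairwise_def by blast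
  qed
qed

text \<open>The covering point \<open>z\<close> of an interval need not be its centre, hence the factor 2.\<close>

lemma hausdorff1_pre_image_le_open_dyadic:
  fixes f :: "real \<Rightarrow> 'a::metric_space"
  assumes N: "bounded N" "N \<subseteq> S" and lip: "\<And>x. x \<in> N \<Longrightarrow> pointwise_lipschitz C f S x"
    and "0 \<le> C" "0 < d" and U: "open U" "N \<subseteq> U"
  shows "hausdorff1_pre d (f ` N) \<le> ennreal (2 * C) * emeasure lebesgue U"
proof -
  obtain R where R: "\<And>x. 0 < R x" "\<And>x. x \<in> N \<Longrightarrow> ball x (R x) \<subseteq> U"
      "\<And>x y. x \<in> N \<Longrightarrow> y \<in> S \<inter> ball x (R x) \<Longrightarrow> dist (f y) (f x) \<le> C * dist y x"
      "\<And>x. x \<in> N \<Longrightarrow> 2 * C * R x \<le> d"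
    using pointwise_lipschitz_gauge[OF U lip \<open>0 \<le> C\<close> \<open>0 < d\<close>] by metis
  have gauge: "gauge (\<lambda>x. ball x (R x))" using R(1) by (auto simp: gauge_def)
  obtain \<D> where \<D>: "countable \<D>" "\<And>K. K \<in> \<D> \<Longrightarrow> \<exists>u v. u < v \<and> K = {u..v}"
      "disjoint_family_on interior \<D>" "\<And>K. K \<in> \<D> \<Longrightarrow> \<exists>z \<in> N \<inter> K. K \<subseteq> ball z (R z)"
      "N \<subseteq> \<Union>\<D>"
    by (rule bounded_real_covering_lemma[OF N(1) gauge]) (rule that; assumption)
  have image_K: "bounded (f ` (S \<inter> K)) \<and> diameter (f ` (S \<inter> K)) \<le> d \<and>
      ennreal (diameter (f ` (S \<inter> K))) \<le> ennreal (2 * C) * emeasure lebesgue (interior K)"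
    if KD: "K \<in> \<D>" for K
  proof -
    obtain u v where K: "u < v" "K = {u..v}" using \<D>(2)[OF KD] by blast
    obtain z where z: "z \<in> N" "z \<in> K" "K \<subseteq> ball z (R z)" using \<D>(4)[OF KD] by blast
    have "bounded (f ` (S \<inter> K)) \<and> diameter (f ` (S \<inter> K)) \<le> 2 * C * min (R z) (v - u)"
      unfolding K(2) using z[unfolded K(2)] \<open>0 \<le> C\<close> R(3)[OF z(1)]
      by (intro bounded_diameter_image_interval_le) auto
    moreover have "2 * C * min (R z) (v - u) \<le> 2 * C * R z"
      "2 * C * min (R z) (v - u) \<le> 2 * C * (v - u)"
      using \<open>0 \<le> C\<close> by (simp_all add: mult_left_mono)
    moreover have "emeasure lebesgue (interior K) = ennreal (v - u)"
      using K by simp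
    ultimately show ?thesis
      using R(4)[OF z(1)] \<open>0 \<le> C\<close> \<open>u < v\<close> by (auto simp flip: ennreal_mult intro!: ennreal_leI)
  qed
  have "hausdorff1_pre d (f ` N) \<le> ennreal (2 * C) * emeasure lebesgue (\<Union>K\<in>\<D>. interior K)"
  proof (rule hausdorff1_pre_le_disjoint_cover[OF \<D>(1) _ _ _ _ _ \<D>(3)])
    show "f ` N \<subseteq> (\<Union>K\<in>\<D>. f ` (S \<inter> K))" using \<D>(5) N(2) by blast
    show "interior K \<in> sets lebesgue" for K :: "real set" by simp
    show "0 \<le> d" using \<open>0 < d\<close> by simp
  qed (use image_K in simp_all)
  also have "\<dots> \<le> ennreal (2 * C) * emeasure lebesgue U"
  proof (intro mult_left_mono emeasure_mono)
    show "(\<Union>K\<in>\<D>. interior K) \<subseteq> U"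
      using \<D>(4) R(2) interior_subset by blast
    show "U \<in> sets lebesgue" using U(1) by simp
  qed simp
  finally show ?thesis .
qed

lemma hausdorff1_pre_image_negligible:
  fixes f :: "real \<Rightarrow> 'a::metric_space"
  assumes "negligible N" "bounded N" "N \<subseteq> S" "\<And>x. x \<in> N \<Longrightarrow> pointwise_lipschitz C f S x"
    and "0 \<le> C" "0 < d"
  shows "hausdorff1_pre d (f ` N) = 0"
proof -
  have N: "N \<in> sets lebesgue" using assms(1) by (rule negligible_imp_sets)
  have "hausdorff1_pre d (f ` N) \<le> ennreal (2 * C) * emeasure lebesgue N"
  proof (rule le_emeasure_lebesgue_by_open_supersets[OF N])
    show "hausdorff1_pre d (f ` N) \<le> ennreal (2 * C) * emeasure lebesgue U"
      if "open U" "N \<subseteq> U" for U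
      using assms that by (intro hausdorff1_pre_image_le_open_dyadic) auto
  qed (use assms in simp)
  also have "emeasure lebesgue N = 0" using assms(1) negligible_iff_emeasure0[OF N] by simp
  finally show ?thesis by simp
qed

lemma hausdorff1_pre_image_disjoint_balls_le:
  fixes f :: "real \<Rightarrow> 'a::metric_space"
  assumes "countable \<C>" "disjoint_family_on (\<lambda>(x, r). ball x r) \<C>" "open U" "0 \<le> C" "0 \<le> d"
    and balls: "\<And>x r. (x, r) \<in> \<C> \<Longrightarrow> 0 < r \<and> ball x r \<subseteq> U \<and> 2 * C * r \<le> d \<and>
      (\<forall>y \<in> S \<inter> ball x r. dist (f y) (f x) \<le> C * dist y x)"
  shows "hausdorff1_pre d (\<Union>(x, r)\<in>\<C>. f ` (S \<inter> ball x r)) \<le> ennreal C * emeasure lebesgue U"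
proof -
  have image_ball: "bounded (f ` (S \<inter> ball x r)) \<and> diameter (f ` (S \<inter> ball x r)) \<le> d \<and>
      ennreal (diameter (f ` (S \<inter> ball x r))) \<le> ennreal C * emeasure lebesgue (ball x r)"
    if "(x, r) \<in> \<C>" for x r
  proof -
    have "bounded (f ` (S \<inter> ball x r)) \<and> diameter (f ` (S \<inter> ball x r)) \<le> 2 * C * r"
      using balls[OF that] \<open>0 \<le> C\<close>
      by (intro bounded_diameter_image_le[where z = x]) (auto simp: dist_commute)
    moreover have "emeasure lebesgue (ball x r) = ennreal (2 * r)"
      using balls[OF that] by (simp add: ball_eq_greaterThanLessThan)
    ultimately show ?thesis
      using balls[OF that] \<open>0 \<le> C\<close> by (auto simp flip: ennreal_mult intro!: ennreal_leI)
  qed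
  have "hausdorff1_pre d (\<Union>(x, r)\<in>\<C>. f ` (S \<inter> ball x r))
      \<le> ennreal C * emeasure lebesgue (\<Union>(x, r)\<in>\<C>. ball x r)"
    by (rule hausdorff1_pre_le_disjoint_cover[where G = "\<lambda>(x, r). f ` (S \<inter> ball x r)",
          OF assms(1) _ assms(5) _ _ _ assms(2)])
      (use image_ball in auto)
  also have "\<dots> \<le> ennreal C * emeasure lebesgue U"
  proof (intro mult_left_mono emeasure_mono)
    show "(\<Union>(x, r)\<in>\<C>. ball x r) \<subseteq> U" using balls by blast
    show "U \<in> sets lebesgue" using assms(3) by simp
  qed simp
  finally show ?thesis .
qed

lemma Vitali_covering_theorem_balls_radius:
  fixes A :: "'a::euclidean_space set"
  assumes "\<And>x. x \<in> A \<Longrightarrow> 0 < R x"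
  obtains \<C> where "countable \<C>" "\<And>x r. (x, r) \<in> \<C> \<Longrightarrow> x \<in> A \<and> 0 < r \<and> r \<le> R x"
    "disjoint_family_on (\<lambda>(x, r). ball x r) \<C>" "negligible (A - (\<Union>(x, r)\<in>\<C>. ball x r))"
proof -
  define K where "K = {(x, r). x \<in> A \<and> 0 < r \<and> r \<le> R x}"
  have "\<exists>i. i \<in> K \<and> x \<in> ball (fst i) (snd i) \<and> snd i < \<delta>" if "x \<in> A" "0 < \<delta>" for x \<delta>
    using that assms[of x] by (intro exI[of _ "(x, min (R x) (\<delta> / 2))"]) (auto simp: K_def)
  then obtain \<C> where \<C>: "countable \<C>" "\<C> \<subseteq> K"
      "pairwise (\<lambda>i j. disjnt (ball (fst i) (snd i)) (ball (fst j) (snd j))) \<C>"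
      "negligible (A - (\<Union>(x, r)\<in>\<C>. ball x r))"
    by (rule Vitali_covering_theorem_balls[of A K fst snd]) (auto simp: case_prod_beta)
  show ?thesis
  proof (rule that[OF \<C>(1) _ _ \<C>(4)])
    show "x \<in> A \<and> 0 < r \<and> r \<le> R x" if "(x, r) \<in> \<C>" for x r
      using \<C>(2) that by (auto simp: K_def)
    show "disjoint_family_on (\<lambda>(x, r). ball x r) \<C>"
      using \<C>(3) unfolding disjoint_family_on_def pairwise_def disjnt_def by (auto simp: case_prod_beta)
  qed
qed

lemma hausdorff1_pre_image_le_open:
  fixes f :: "real \<Rightarrow> 'a::metric_space"
  assumes A: "bounded A" "A \<subseteq> S" and lip: "\<And>x. x \<in> A \<Longrightarrow> pointwise_lipschitz C f S x"
    and "0 \<le> C" "0 < d" and U: "open U" "A \<subseteq> U"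
  shows "hausdorff1_pre d (f ` A) \<le> ennreal C * emeasure lebesgue U"
proof -
  obtain R where R: "\<And>x. 0 < R x" "\<And>x. x \<in> A \<Longrightarrow> ball x (R x) \<subseteq> U"
      "\<And>x y. x \<in> A \<Longrightarrow> y \<in> S \<inter> ball x (R x) \<Longrightarrow> dist (f y) (f x) \<le> C * dist y x"
      "\<And>x. x \<in> A \<Longrightarrow> 2 * C * R x \<le> d"
    using pointwise_lipschitz_gauge[OF U lip \<open>0 \<le> C\<close> \<open>0 < d\<close>] by metis
  obtain \<C> where \<C>: "countable \<C>" "\<And>x r. (x, r) \<in> \<C> \<Longrightarrow> x \<in> A \<and> 0 < r \<and> r \<le> R x"
      "disjoint_family_on (\<lambda>(x, r). ball x r) \<C>" "negligible (A - (\<Union>(x, r)\<in>\<C>. ball x r))"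
    using Vitali_covering_theorem_balls_radius[of A R] R(1) by blast
  define P where "P = (\<Union>(x, r)\<in>\<C>. f ` (S \<inter> ball x r))"
  define N where "N = A - (\<Union>(x, r)\<in>\<C>. ball x r)"
  have image_P: "hausdorff1_pre d P \<le> ennreal C * emeasure lebesgue U"
    unfolding P_def
  proof (rule hausdorff1_pre_image_disjoint_balls_le[OF \<C>(1,3) U(1) \<open>0 \<le> C\<close>])
    show "0 < r \<and> ball x r \<subseteq> U \<and> 2 * C * r \<le> d \<and>
        (\<forall>y \<in> S \<inter> ball x r. dist (f y) (f x) \<le> C * dist y x)" if "(x, r) \<in> \<C>" for x r
    proof -
      have x: "x \<in> A" "0 < r" "r \<le> R x" using \<C>(2)[OF that] by auto
      then have "2 * C * r \<le> 2 * C * R x" using \<open>0 \<le> C\<close> by (simp add: mult_left_mono)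
      with x show ?thesis using R(2-4)[OF x(1)] by force
    qed
  qed (use \<open>0 < d\<close> in simp)
  have image_N: "hausdorff1_pre d (f ` N) = 0"
    using \<C>(4) A lip \<open>0 \<le> C\<close> \<open>0 < d\<close> bounded_subset[OF A(1)]
    by (intro hausdorff1_pre_image_negligible[of N S C f]) (auto simp: N_def)
  have "f ` A \<subseteq> P \<union> f ` N"
  proof
    fix y assume "y \<in> f ` A"
    then obtain x where "x \<in> A" "y = f x" by blast
    then show "y \<in> P \<union> f ` N"
      using A(2) by (cases "x \<in> (\<Union>(x, r)\<in>\<C>. ball x r)") (auto simp: P_def N_def)
  qed
  then have "hausdorff1_pre d (f ` A) \<le> hausdorff1_pre d (P \<union> f ` N)"
    by (rule hausdorff1_pre_mono)
  also have "\<dots> \<le> hausdorff1_pre d P + hausdorff1_pre d (f ` N)"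
    using \<open>0 < d\<close> by (intro hausdorff1_pre_Un) simp
  finally show ?thesis using image_P image_N by simp
qed

lemma hausdorff1_image_le_lipschitz:
  fixes f :: "real \<Rightarrow> 'a::metric_space"
  assumes "A \<in> sets lebesgue" "bounded A" "A \<subseteq> S"
    and "\<And>x. x \<in> A \<Longrightarrow> pointwise_lipschitz C f S x" "0 \<le> C"
  shows "hausdorff1 (f ` A) \<le> ennreal C * emeasure lebesgue A"
  unfolding hausdorff1_def
proof (rule SUP_least)
  fix d :: real assume "d \<in> {0<..}"
  show "hausdorff1_pre d (f ` A) \<le> ennreal C * emeasure lebesgue A"
  proof (rule le_emeasure_lebesgue_by_open_supersets[OF assms(1,5)])
    show "hausdorff1_pre d (f ` A) \<le> ennreal C * emeasure lebesgue U"
      if "open U" "A \<subseteq> U" for U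
      using assms \<open>d \<in> {0<..}\<close> that by (intro hausdorff1_pre_image_le_open) auto
  qed
qed

definition band :: "('a \<Rightarrow> real) \<Rightarrow> 'a set \<Rightarrow> real \<Rightarrow> nat \<Rightarrow> 'a set" where
  "band g A \<epsilon> j = {x \<in> A. real j * \<epsilon> \<le> g x \<and> g x < (real j + 1) * \<epsilon>}"

lemma sets_band:
  assumes "A \<in> sets M" "g \<in> borel_measurable (restrict_space M A)"
  shows "band g A \<epsilon> j \<in> sets M"
proof -
  have "band g A \<epsilon> j = g -` {real j * \<epsilon> ..< (real j + 1) * \<epsilon>} \<inter> space (restrict_space M A)"
    using sets.sets_into_space[OF assms(1)] by (auto simp: band_def space_restrict_space)
  also have "\<dots> \<in> sets (restrict_space M A)"
    by (rule measurable_sets[OF assms(2)]) simp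
  finally show ?thesis using assms(1) by (simp add: sets_restrict_space_iff)
qed

lemma disjoint_family_band:
  assumes "0 < \<epsilon>"
  shows "disjoint_family (band g A \<epsilon>)"
  unfolding disjoint_family_on_def
proof (intro ballI impI)
  fix i j :: nat assume "i \<noteq> j"
  have "i \<le> j" if "x \<in> band g A \<epsilon> i" "x \<in> band g A \<epsilon> j" for i j x
  proof -
    have "real i * \<epsilon> < (real j + 1) * \<epsilon>" using that by (auto simp: band_def)
    then show ?thesis using assms by simp
  qed
  then show "band g A \<epsilon> i \<inter> band g A \<epsilon> j = {}" using \<open>i \<noteq> j\<close> by (meson disjoint_iff le_antisym)
qed

lemma UN_band:
  assumes "0 < \<epsilon>" "\<And>x. x \<in> A \<Longrightarrow> 0 \<le> g x"
  shows "(\<Union>j. band g A \<epsilon> j) = A"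
proof
  show "A \<subseteq> (\<Union>j. band g A \<epsilon> j)"
  proof
    fix x assume x: "x \<in> A"
    define j where "j = nat \<lfloor>g x / \<epsilon>\<rfloor>"
    have "0 \<le> g x / \<epsilon>" using assms x by simp
    then have "real j \<le> g x / \<epsilon>" "g x / \<epsilon> < real j + 1"
      unfolding j_def by linarith+
    then have "x \<in> band g A \<epsilon> j" using x assms(1) by (simp add: band_def field_simps)
    then show "x \<in> (\<Union>j. band g A \<epsilon> j)" by blast
  qed
qed (auto simp: band_def)

lemma suminf_band_indicator_le:
  assumes "0 < \<epsilon>" "0 \<le> \<delta>" "\<And>x. x \<in> A \<Longrightarrow> 0 \<le> g x"
  shows "(\<Sum>j. ennreal (real j * \<epsilon> + \<delta>) * indicator (band g A \<epsilon> j) x)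
    \<le> ennreal (g x + \<delta>) * indicator A x"
proof -
  have "real j * \<epsilon> + \<delta> \<le> g x + \<delta>" if "x \<in> band g A \<epsilon> j" for j
    using that by (simp add: band_def)
  then have "(\<Sum>j. ennreal (real j * \<epsilon> + \<delta>) * indicator (band g A \<epsilon> j) x)
      \<le> (\<Sum>j. ennreal (g x + \<delta>) * indicator (band g A \<epsilon> j) x)"
    by (intro suminf_le summableI) (simp add: indicator_def ennreal_leI)
  also have "\<dots> = ennreal (g x + \<delta>) * indicator A x"
    using suminf_indicator[OF disjoint_family_band[OF assms(1)], of g A x] UN_band[of \<epsilon> A g] assms
    by simp
  finally show ?thesis .
qed

lemma hausdorff1_image_le_nn_integral_plus_measure:
  fixes f :: "real \<Rightarrow> 'a::metric_space" and g :: "real \<Rightarrow> real"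
  assumes A: "A \<in> sets lebesgue" "bounded A" "A \<subseteq> S"
    and g: "g \<in> borel_measurable (restrict_space lebesgue A)" "\<And>x. x \<in> A \<Longrightarrow> 0 \<le> g x"
    and lip: "\<And>x e. x \<in> A \<Longrightarrow> 0 < e \<Longrightarrow> pointwise_lipschitz (g x + e) f S x"
    and "0 < \<epsilon>"
  shows "hausdorff1 (f ` A)
    \<le> (\<integral>\<^sup>+ x \<in> A. ennreal (g x) \<partial>lebesgue) + ennreal (2 * \<epsilon>) * emeasure lebesgue A"
proof -
  let ?B = "band g A \<epsilon>"
  have [measurable]: "?B j \<in> sets lebesgue" for j
    using A(1) g(1) by (rule sets_band)
  have UN_B: "(\<Union>j. ?B j) = A"
    using \<open>0 < \<epsilon>\<close> g(2) by (rule UN_band)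
  have image_B: "hausdorff1 (f ` ?B j) \<le> ennreal (real j * \<epsilon> + 2 * \<epsilon>) * emeasure lebesgue (?B j)"
    for j
  proof (rule hausdorff1_image_le_lipschitz)
    show "bounded (?B j)" "?B j \<subseteq> S" using A by (auto simp: band_def intro: bounded_subset)
    show "pointwise_lipschitz (real j * \<epsilon> + 2 * \<epsilon>) f S x" if "x \<in> ?B j" for x
      using that \<open>0 < \<epsilon>\<close>
      by (intro pointwise_lipschitz_mono[OF lip[of x \<epsilon>]]) (auto simp: band_def algebra_simps)
  qed (use \<open>0 < \<epsilon>\<close> in auto)
  have step_le: "(\<Sum>j. ennreal (real j * \<epsilon> + 2 * \<epsilon>) * indicator (?B j) x)
      \<le> ennreal (g x) * indicator A x + ennreal (2 * \<epsilon>) * indicator A x" for x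
    using suminf_band_indicator_le[of \<epsilon> "2 * \<epsilon>" A g x] \<open>0 < \<epsilon>\<close> g(2)
    by (cases "x \<in> A") simp_all
  have "f ` A = (\<Union>j. f ` ?B j)"
    using UN_B by blast
  then have "hausdorff1 (f ` A) \<le> (\<Sum>j. hausdorff1 (f ` ?B j))"
    using hausdorff1_countable_subadditive[of "\<lambda>j. f ` ?B j"] by simp
  also have "\<dots> \<le> (\<Sum>j. ennreal (real j * \<epsilon> + 2 * \<epsilon>) * emeasure lebesgue (?B j))"
    by (intro suminf_le image_B summableI)
  also have "\<dots> = (\<integral>\<^sup>+ x. (\<Sum>j. ennreal (real j * \<epsilon> + 2 * \<epsilon>) * indicator (?B j) x) \<partial>lebesgue)"
    by (simp add: nn_integral_suminf nn_integral_cmult_indicator)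
  also have "\<dots> \<le> (\<integral>\<^sup>+ x. ennreal (g x) * indicator A x + ennreal (2 * \<epsilon>) * indicator A x \<partial>lebesgue)"
    by (intro nn_integral_mono step_le)
  also have "\<dots> = (\<integral>\<^sup>+ x \<in> A. ennreal (g x) \<partial>lebesgue) + ennreal (2 * \<epsilon>) * emeasure lebesgue A"
  proof -
    have "(\<lambda>x. ennreal (g x) * indicator A x) \<in> borel_measurable lebesgue"
      using g(1) A(1) by (subst borel_measurable_restrict_space_iff_ennreal[symmetric]) auto
    then show ?thesis
      using A(1) by (simp add: nn_integral_add nn_integral_cmult_indicator)
  qed
  finally show ?thesis .
qed

lemma hausdorff1_image_le_nn_integral:
  fixes f :: "real \<Rightarrow> 'a::metric_space" and g :: "real \<Rightarrow> real"
  assumes A: "A \<in> sets lebesgue" "bounded A" "A \<subseteq> S"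
    and g: "g \<in> borel_measurable (restrict_space lebesgue A)" "\<And>x. x \<in> A \<Longrightarrow> 0 \<le> g x"
    and lip: "\<And>x e. x \<in> A \<Longrightarrow> 0 < e \<Longrightarrow> pointwise_lipschitz (g x + e) f S x"
  shows "hausdorff1 (f ` A) \<le> (\<integral>\<^sup>+ x \<in> A. ennreal (g x) \<partial>lebesgue)"
proof (rule ennreal_le_epsilon)
  fix e :: real assume "0 < e"
  define m where "m = measure lebesgue A"
  define \<epsilon> where "\<epsilon> = e / (2 * (m + 1))"
  have "0 \<le> m" by (simp add: m_def)
  then have "0 < \<epsilon>" using \<open>0 < e\<close> by (simp add: \<epsilon>_def)
  have "emeasure lebesgue A = ennreal m"
    using A(1,2) by (simp add: m_def emeasure_eq_measure2 bounded_set_imp_lmeasurable)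
  moreover have "2 * \<epsilon> * m \<le> e"
    using \<open>0 < e\<close> \<open>0 \<le> m\<close> by (simp add: \<epsilon>_def field_simps)
  ultimately have "ennreal (2 * \<epsilon>) * emeasure lebesgue A \<le> ennreal e"
    using \<open>0 < \<epsilon>\<close> \<open>0 \<le> m\<close> by (simp add: ennreal_leI flip: ennreal_mult)
  then show "hausdorff1 (f ` A) \<le> (\<integral>\<^sup>+ x \<in> A. ennreal (g x) \<partial>lebesgue) + ennreal e"
    using hausdorff1_image_le_nn_integral_plus_measure[OF A g lip \<open>0 < \<epsilon>\<close>]
    by (meson add_left_mono order_trans)
qed

lemma md_quot_tendsto_md:
  fixes f :: "real \<Rightarrow> 'a::metric_space"
  assumes "a < b" "x \<in> {a..b}" "md_exists f a b x"
  shows "(md_quot f x \<longlongrightarrow> md f a b x) (at 0 within {t. x + t \<in> {a..b}})"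
    and "at 0 within {t. x + t \<in> {a..b}} \<noteq> bot"
proof -
  define T where "T = {t. x + t \<in> {a..b}}"
  have "(0::real) islimpt T"
    unfolding islimpt_approachable
  proof (intro allI impI)
    fix e :: real assume "0 < e"
    show "\<exists>t\<in>T. t \<noteq> 0 \<and> dist t 0 < e"
    proof (cases "x < b")
      case True
      then show ?thesis using \<open>0 < e\<close> assms(2)
        by (intro bexI[of _ "min (e / 2) (b - x)"]) (auto simp: T_def dist_real_def)
    next
      case False
      then show ?thesis using \<open>0 < e\<close> assms(1,2)
        by (intro bexI[of _ "- min (e / 2) (b - a)"]) (auto simp: T_def dist_real_def)
    qed
  qed
  then show nontrivial: "at 0 within {t. x + t \<in> {a..b}} \<noteq> bot"
    by (simp add: T_def trivial_limit_within)
  obtain L where L: "(md_quot f x \<longlongrightarrow> L) (at 0 within {t. x + t \<in> {a..b}})"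
    using assms(3) unfolding md_exists_def by blast
  moreover have "md f a b x = L"
    unfolding md_def using tendsto_Lim[OF nontrivial L] .
  ultimately show "(md_quot f x \<longlongrightarrow> md f a b x) (at 0 within {t. x + t \<in> {a..b}})"
    by simp
qed

lemma md_nonneg:
  fixes f :: "real \<Rightarrow> 'a::metric_space"
  assumes "a < b" "x \<in> {a..b}" "md_exists f a b x"
  shows "0 \<le> md f a b x"
  using md_quot_tendsto_md[OF assms]
  by (intro tendsto_lowerbound[of "md_quot f x"]) (auto simp: md_quot_def)

lemma md_pointwise_lipschitz:
  fixes f :: "real \<Rightarrow> 'a::metric_space"
  assumes "a < b" "x \<in> {a..b}" "md_exists f a b x" "0 < e"
  shows "pointwise_lipschitz (md f a b x + e) f {a..b} x"
proof -
  have "\<forall>\<^sub>F t in at 0 within {t. x + t \<in> {a..b}}. md_quot f x t < md f a b x + e"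
    using order_tendstoD(2)[OF md_quot_tendsto_md(1)[OF assms(1-3)]] \<open>0 < e\<close> by simp
  then obtain r where "r > 0"
    and r: "\<And>t. x + t \<in> {a..b} \<Longrightarrow> t \<noteq> 0 \<Longrightarrow> dist t 0 < r \<Longrightarrow> md_quot f x t < md f a b x + e"
    unfolding eventually_at by auto
  have "dist (f y) (f x) \<le> (md f a b x + e) * dist y x" if "y \<in> {a..b} \<inter> ball x r" for y
  proof (cases "y = x")
    case False
    then have "dist (f y) (f x) / \<bar>y - x\<bar> < md f a b x + e"
      using r[of "y - x"] that by (simp add: md_quot_def dist_real_def abs_minus_commute)
    then show ?thesis using False by (simp add: divide_less_eq dist_real_def less_imp_le)
  qed simp
  then show ?thesis unfolding pointwise_lipschitz_def using \<open>r > 0\<close> by blast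
qed

theorem theorem2p4:
  fixes f :: "real \<Rightarrow> 'a::metric_space" and a b :: real and E :: "real set"
  assumes "E \<subseteq> {a..b}"
    and "E \<in> sets lebesgue"
    and "\<forall>x\<in>E. md_exists f a b x"
    and "(\<lambda>x. md f a b x) \<in> borel_measurable (restrict_space lebesgue E)"
  shows "hausdorff1 (f ` E) \<le> (\<integral>\<^sup>+ x \<in> E. ennreal (md f a b x) \<partial>lebesgue)"
proof (cases "a < b")
  case False
  \<comment> \<open>Here \<open>md\<close> is a junk value (a limit along the trivial filter), but \<open>E\<close> has at most one point.\<close>
  with assms(1) have "E \<subseteq> {a}" by (auto simp: subset_iff)
  then have "f ` E \<subseteq> {f a}" by auto
  then show ?thesis by (simp add: hausdorff1_subset_singleton)
next
  case True
  have "bounded E" using assms(1) bounded_closed_interval bounded_subset by blast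
  with assms True show ?thesis
    by (intro hausdorff1_image_le_nn_integral[where S = "{a..b}"])
      (auto intro: md_nonneg md_pointwise_lipschitz)
qed

end
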